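(* For $i=1,2$ let $\mathbf{L}_i=(L_i,\le)$ be a finite lattice with more than two elements and let $(R_i,\vee,\circ)$ be a subsemiring of $(\mathrm{Res}_1(\mathbf{L}_i),\vee,\circ)$ such that $f_{a,0}\in R_i$ for all $a\in L_i\setminus\{1\}$, every $f\in R_i$ satisfies $f_{a,0}\le f$ for some $a\in L_i\setminus\{1\}$, and for all $a\in L_i\setminus\{0,1\}$, $b\in L_i$ there exists $f\in R_i$ with $f(a)=b$. If $(R_1,\vee,\circ)$ and $(R_2,\vee,\circ)$ are isomorphic semirings, then $\mathbf{L}_1$ and $\mathbf{L}_2$ are isomorphic.
   Context: For a finite lattice $\mathbf{L}$ with least element $0$ and greatest element $1$, $\mathrm{Res}_1(\mathbf{L})$ is the set of maps $f:L\to L$ preserving binary joins with $f(0)=0$ and $f(1)=1$, a semiring under pointwise join $\vee$ and composition $\circ$, ordered pointwise. $f_{a,b}(x)=b$ if $x\le a$ and $1$ otherwise. *)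

theory Defs
  imports Main
begin

definition Res1 :: "('a::bounded_lattice \<Rightarrow> 'a) set" where
  "Res1 = {f. (\<forall>x y. f (sup x y) = sup (f x) (f y)) \<and> f bot = bot \<and> f top = top}"

definition fab :: "'a::bounded_lattice \<Rightarrow> 'a \<Rightarrow> 'a \<Rightarrow> 'a" where
  "fab a b = (\<lambda>x. if x \<le> a then b else top)"

definition subsemiring_Res1 :: "('a::bounded_lattice \<Rightarrow> 'a) set \<Rightarrow> bool" where
  "subsemiring_Res1 R \<longleftrightarrow> R \<subseteq> Res1 \<and>
     (\<forall>f\<in>R. \<forall>g\<in>R. (\<lambda>x. sup (f x) (g x)) \<in> R \<and> f \<circ> g \<in> R)"

definition good_R :: "('a::bounded_lattice \<Rightarrow> 'a) set \<Rightarrow> bool" where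
  "good_R R \<longleftrightarrow> subsemiring_Res1 R \<and>
     (\<forall>a. a \<noteq> top \<longrightarrow> fab a bot \<in> R) \<and>
     (\<forall>f\<in>R. \<exists>a. a \<noteq> top \<and> fab a bot \<le> f) \<and>
     (\<forall>a b. a \<noteq> bot \<and> a \<noteq> top \<longrightarrow> (\<exists>f\<in>R. f a = b))"

definition semiring_iso ::
  "(('a::bounded_lattice \<Rightarrow> 'a) \<Rightarrow> ('b::bounded_lattice \<Rightarrow> 'b)) \<Rightarrow> ('a \<Rightarrow> 'a) set \<Rightarrow> ('b \<Rightarrow> 'b) set \<Rightarrow> bool" where
  "semiring_iso \<phi> R1 R2 \<longleftrightarrow> bij_betw \<phi> R1 R2 \<and>
     (\<forall>f\<in>R1. \<forall>g\<in>R1. \<phi> (\<lambda>x. sup (f x) (g x)) = (\<lambda>x. sup (\<phi> f x) (\<phi> g x))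
                   \<and> \<phi> (f \<circ> g) = \<phi> f \<circ> \<phi> g)"

definition lattice_iso :: "('a::lattice \<Rightarrow> 'b::lattice) \<Rightarrow> bool" where
  "lattice_iso h \<longleftrightarrow> bij h \<and> (\<forall>x y. x \<le> y \<longleftrightarrow> h x \<le> h y)"

end

theory Submission
  imports Defs
begin

text \<open>The semiring structure singles out the maps \<open>f\<^sub>a\<^sub>,\<^sub>0\<close>: in \<open>R\<close> they are exactly the
  left-absorbing elements (\<open>g \<circ> f = f\<close> for all \<open>g \<in> R\<close>), because a map fixed by every
  element of \<open>R\<close> can only take the values \<open>0\<close> and \<open>1\<close>. A semiring isomorphism therefore
  maps these elements onto each other and, since it preserves the order \<open>f \<le> g \<longleftrightarrow> f \<or> g = g\<close>,
  induces an order isomorphism of \<open>L\<^sub>1 - {1}\<close> onto \<open>L\<^sub>2 - {1}\<close>, as \<open>a \<mapsto> f\<^sub>a\<^sub>,\<^sub>0\<close> is an order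
  anti-embedding. Adjoining the top elements gives the lattice isomorphism.\<close>

definition left_absorbing :: "('a \<Rightarrow> 'a) set \<Rightarrow> ('a \<Rightarrow> 'a) set" where
  "left_absorbing R = {f \<in> R. \<forall>g\<in>R. g \<circ> f = f}"

lemma top_neq_bot_if_card_gt_1:
  assumes "card (UNIV :: 'a::{finite,bounded_lattice} set) > 1"
  shows "(top::'a) \<noteq> bot"
proof
  assume "(top::'a) = bot"
  then have "x = bot" for x :: 'a by (metis bot_unique top_greatest)
  then have "(UNIV::'a set) = {bot}" by auto
  then have "card (UNIV::'a set) = card {bot::'a}" by (rule arg_cong)
  with assms show False by simp
qed

lemma Res1_mono:
  assumes "f \<in> Res1" "x \<le> y"
  shows "f x \<le> f y"
proof -
  have "f y = f (sup x y)" using assms(2) by (simp add: sup_absorb2)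
  also have "\<dots> = sup (f x) (f y)" using assms(1) by (simp add: Res1_def)
  finally show ?thesis by (metis sup_ge1)
qed

lemma Res1_Sup_fin_eq_bot:
  assumes "f \<in> Res1" "finite A" "A \<noteq> {}" "\<forall>x\<in>A. f x = bot"
  shows "f (Sup_fin A) = (bot::'a::bounded_lattice)"
  using assms(2-4)
proof (induction A rule: finite_ne_induct)
  case (insert x F)
  then show ?case using assms(1) by (simp add: Sup_fin.insert Res1_def)
qed simp

lemma Res1_comp_fab_bot: "g \<in> Res1 \<Longrightarrow> g \<circ> fab a bot = fab a bot"
  by (auto simp: fab_def Res1_def fun_eq_iff)

text \<open>The kernel \<open>{x. f x = 0}\<close> is closed under finite joins, so it is the principal ideal
  below its largest element.\<close>
lemma Res1_two_valued_eq_fab: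
  fixes f :: "'a::{finite,bounded_lattice} \<Rightarrow> 'a"
  assumes "f \<in> Res1" and two_valued: "\<And>x. f x = bot \<or> f x = top"
  obtains a where "f = fab a bot"
proof
  define Z where "Z = {x. f x = bot}"
  have "bot \<in> Z" using assms(1) by (simp add: Z_def Res1_def)
  then have fZ: "f (Sup_fin Z) = bot"
    by (intro Res1_Sup_fin_eq_bot[OF assms(1)]) (auto simp: Z_def)
  show "f = fab (Sup_fin Z) bot"
  proof
    fix x
    show "f x = fab (Sup_fin Z) bot x"
    proof (cases "x \<le> Sup_fin Z")
      case True
      then show ?thesis using Res1_mono[OF assms(1) True] fZ by (simp add: fab_def bot_unique)
    next
      case False
      then have "x \<notin> Z" using Sup_fin.coboundedI[of Z x] by auto
      then show ?thesis using False two_valued by (auto simp: Z_def fab_def)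
    qed
  qed
qed

lemma left_absorbing_good_R:
  fixes R :: "('a::{finite,bounded_lattice} \<Rightarrow> 'a) set"
  assumes "good_R R" and "(top::'a) \<noteq> bot"
  shows "left_absorbing R = (\<lambda>a. fab a bot) ` (- {top})"
proof
  have RRes: "R \<subseteq> Res1" using assms(1) by (simp add: good_R_def subsemiring_Res1_def)
  show "(\<lambda>a. fab a bot) ` (- {top}) \<subseteq> left_absorbing R"
    using assms(1) RRes Res1_comp_fab_bot by (auto simp: good_R_def left_absorbing_def)
  show "left_absorbing R \<subseteq> (\<lambda>a. fab a bot) ` (- {top})"
  proof
    fix f assume "f \<in> left_absorbing R"
    then have fR: "f \<in> R" and fixed: "\<And>g. g \<in> R \<Longrightarrow> g (f x) = f x" for x
      by (auto simp: left_absorbing_def fun_eq_iff)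
    have "f x = bot \<or> f x = top" for x
    proof (rule ccontr)
      assume nontrivial: "\<not> (f x = bot \<or> f x = top)"
      then obtain g where "g \<in> R" "g (f x) = bot"
        using assms(1) unfolding good_R_def by blast
      with nontrivial show False using fixed by metis
    qed
    then obtain a where a: "f = fab a bot"
      using Res1_two_valued_eq_fab fR RRes by blast
    then have "a \<noteq> top"
      using fR RRes assms(2) by (auto simp: Res1_def fab_def)
    with a show "f \<in> (\<lambda>a. fab a bot) ` (- {top})" by blast
  qed
qed

lemma fab_bot_le_iff:
  assumes "(top::'a::bounded_lattice) \<noteq> bot"
  shows "fab a (bot::'a) \<le> fab b bot \<longleftrightarrow> b \<le> a"
proof
  assume "fab a bot \<le> fab b bot"
  then have "fab a bot b \<le> fab b bot b" by (simp add: le_fun_def)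
  then show "b \<le> a" using assms by (auto simp: fab_def split: if_splits dest: top_le)
qed (auto simp: le_fun_def fab_def intro: order_trans)

lemma inj_on_fab_bot:
  "(top::'a::bounded_lattice) \<noteq> bot \<Longrightarrow> inj_on (\<lambda>a::'a. fab a bot) A"
  by (intro inj_onI) (metis fab_bot_le_iff order.antisym order.refl)

lemma semiring_iso_le_iff:
  assumes "semiring_iso \<phi> R1 R2" "subsemiring_Res1 R1" "f \<in> R1" "g \<in> R1"
  shows "f \<le> g \<longleftrightarrow> \<phi> f \<le> \<phi> g"
proof -
  have "inj_on \<phi> R1" using assms(1) by (simp add: semiring_iso_def bij_betw_def)
  moreover have "(\<lambda>x. sup (f x) (g x)) \<in> R1" using assms(2-4) by (simp add: subsemiring_Res1_def)
  moreover have "\<phi> (\<lambda>x. sup (f x) (g x)) = (\<lambda>x. sup (\<phi> f x) (\<phi> g x))"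
    using assms(1,3,4) by (simp add: semiring_iso_def)
  ultimately have "(\<lambda>x. sup (f x) (g x)) = g \<longleftrightarrow> (\<lambda>x. sup (\<phi> f x) (\<phi> g x)) = \<phi> g"
    using assms(4) by (metis inj_on_def)
  then show ?thesis
    unfolding le_iff_sup[of f g] le_iff_sup[of "\<phi> f" "\<phi> g"] sup_fun_def .
qed

lemma semiring_iso_bij_betw_left_absorbing:
  assumes "semiring_iso \<phi> R1 R2" "subsemiring_Res1 R1"
  shows "bij_betw \<phi> (left_absorbing R1) (left_absorbing R2)"
proof -
  have bij: "bij_betw \<phi> R1 R2"
    and comp: "\<And>f g. f \<in> R1 \<Longrightarrow> g \<in> R1 \<Longrightarrow> \<phi> (g \<circ> f) = \<phi> g \<circ> \<phi> f"
    using assms(1) by (simp_all add: semiring_iso_def)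
  have inj: "inj_on \<phi> R1" and image: "\<phi> ` R1 = R2"
    using bij by (simp_all add: bij_betw_def)
  have absorbs_iff: "g \<circ> f = f \<longleftrightarrow> \<phi> g \<circ> \<phi> f = \<phi> f" if "f \<in> R1" "g \<in> R1" for f g
  proof -
    have "g \<circ> f \<in> R1" using assms(2) that by (simp add: subsemiring_Res1_def)
    then have "g \<circ> f = f \<longleftrightarrow> \<phi> (g \<circ> f) = \<phi> f"
      using inj that(1) by (auto dest: inj_onD)
    with comp[OF that] show ?thesis by simp
  qed
  have "\<phi> ` left_absorbing R1 = left_absorbing R2"
    unfolding left_absorbing_def using image absorbs_iff by auto
  then show ?thesis
    using inj by (simp add: bij_betw_def left_absorbing_def inj_on_subset)
qed

lemma lattice_iso_extend_top:
  fixes h :: "'a::bounded_lattice \<Rightarrow> 'b::bounded_lattice"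
  assumes bij: "bij_betw h (- {top}) (- {top})"
    and ord: "\<And>x y. x \<noteq> top \<Longrightarrow> y \<noteq> top \<Longrightarrow> x \<le> y \<longleftrightarrow> h x \<le> h y"
  shows "lattice_iso (\<lambda>x. if x = top then top else h x)"
proof -
  let ?H = "\<lambda>x. if x = top then top else h x"
  have ntop: "x \<noteq> top \<Longrightarrow> h x \<noteq> top" for x
    using bij by (auto simp: bij_betw_def)
  have "bij_betw ?H (- {top}) (- {top})"
    by (rule iffD2[OF bij_betw_cong bij]) simp
  then have "bij_betw ?H (- {top} \<union> {top}) (- {top} \<union> {top})"
    by (rule bij_betw_combine) simp_all
  moreover have "- {top} \<union> {top} = (UNIV::'a set)" "- {top} \<union> {top} = (UNIV::'b set)"
    by auto
  ultimately have "bij ?H" by simp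
  moreover have "x \<le> y \<longleftrightarrow> ?H x \<le> ?H y" for x y
  proof (cases "x = top \<or> y = top")
    case True
    then show ?thesis using ntop[of x] ntop[of y] by (auto simp: top_unique)
  next
    case False
    then show ?thesis using ord[of x y] by simp
  qed
  ultimately show ?thesis by (simp add: lattice_iso_def)
qed

lemma lattice_iso_if_order_iso_fab_bot:
  fixes \<psi> :: "('a::bounded_lattice \<Rightarrow> 'a) \<Rightarrow> ('b::bounded_lattice \<Rightarrow> 'b)"
  assumes tb1: "(top::'a) \<noteq> bot" and tb2: "(top::'b) \<noteq> bot"
    and \<psi>_bij: "bij_betw \<psi> ((\<lambda>a. fab a bot) ` (- {top})) ((\<lambda>b. fab b bot) ` (- {top}))"
    and \<psi>_ord: "\<And>a a'. a \<noteq> top \<Longrightarrow> a' \<noteq> top \<Longrightarrow>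
      fab a bot \<le> fab a' bot \<longleftrightarrow> \<psi> (fab a bot) \<le> \<psi> (fab a' bot)"
  obtains h :: "'a \<Rightarrow> 'b" where "lattice_iso h"
proof -
  let ?F1 = "\<lambda>a::'a. fab a bot" and ?F2 = "\<lambda>b::'b. fab b bot"
  define h where "h = inv_into (- {top}) ?F2 \<circ> \<psi> \<circ> ?F1"
  have F1: "bij_betw ?F1 (- {top}) (?F1 ` (- {top}))"
    and F2: "bij_betw ?F2 (- {top}) (?F2 ` (- {top}))"
    by (simp_all add: bij_betw_def inj_on_fab_bot tb1 tb2)
  have h_bij: "bij_betw h (- {top}) (- {top})"
    unfolding h_def
    by (rule bij_betw_trans[OF F1 bij_betw_trans[OF \<psi>_bij bij_betw_inv_into[OF F2]]])
  have F2h: "\<psi> (?F1 x) = ?F2 (h x)" if "x \<noteq> top" for x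
  proof -
    have "\<psi> (?F1 x) \<in> ?F2 ` (- {top})"
      using that \<psi>_bij by (auto simp: bij_betw_def)
    then show ?thesis unfolding h_def comp_apply by (rule f_inv_into_f[symmetric])
  qed
  have "x \<le> y \<longleftrightarrow> h x \<le> h y" if "x \<noteq> top" "y \<noteq> top" for x y
  proof -
    have "x \<le> y \<longleftrightarrow> ?F1 y \<le> ?F1 x" using fab_bot_le_iff[OF tb1] by simp
    also have "\<dots> \<longleftrightarrow> ?F2 (h y) \<le> ?F2 (h x)" using \<psi>_ord that F2h by simp
    also have "\<dots> \<longleftrightarrow> h x \<le> h y" using fab_bot_le_iff[OF tb2] by simp
    finally show ?thesis .
  qed
  with h_bij show ?thesis using lattice_iso_extend_top that by blast
qed

theorem proposition6p4:
  fixes R1 :: "('a::{finite,bounded_lattice} \<Rightarrow> 'a) set"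
    and R2 :: "('b::{finite,bounded_lattice} \<Rightarrow> 'b) set"
  assumes "card (UNIV :: 'a set) > 2" and "card (UNIV :: 'b set) > 2"
    and "good_R R1" and "good_R R2"
    and "\<exists>\<phi>. semiring_iso \<phi> R1 R2"
  shows "\<exists>h :: 'a \<Rightarrow> 'b. lattice_iso h"
proof -
  obtain \<phi> where \<phi>: "semiring_iso \<phi> R1 R2" using assms(5) by blast
  have tb1: "(top::'a) \<noteq> bot" and tb2: "(top::'b) \<noteq> bot"
    using assms(1,2) by (simp_all add: top_neq_bot_if_card_gt_1)
  have sub1: "subsemiring_Res1 R1" using assms(3) by (simp add: good_R_def)
  have "bij_betw \<phi> ((\<lambda>a. fab a bot) ` (- {top})) ((\<lambda>b. fab b bot) ` (- {top}))"
    using semiring_iso_bij_betw_left_absorbing[OF \<phi> sub1]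
    by (simp add: left_absorbing_good_R assms(3,4) tb1 tb2)
  moreover have "fab a bot \<le> fab a' bot \<longleftrightarrow> \<phi> (fab a bot) \<le> \<phi> (fab a' bot)"
    if "a \<noteq> top" "a' \<noteq> top" for a a' :: 'a
    using semiring_iso_le_iff[OF \<phi> sub1] assms(3) that by (simp add: good_R_def)
  ultimately show ?thesis
    using lattice_iso_if_order_iso_fab_bot[OF tb1 tb2] by blast
qed

end
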